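(* The set $V=\{(y,x)\in M:\max_{1\le i\le d}e^{-\lambda_iy/2}|x_i|\le1\}$ is geodesically convex in $(M,g)$.
   Context: Let $d\ge1$, $0<\lambda_1\le\cdots\le\lambda_d$, and $M$ be $\mathbb{R}^{d+1}$ with coordinates $(y,x)=(y,x_1,\dots,x_d)$ and the Riemannian metric $g=dy^2+\sum_{i=1}^d e^{-2\lambda_i y}dx_i^2$. *)

theory Defs
  imports "HOL-Analysis.Analysis"
begin

(* Points of M = R^{d+1} are pairs (y, x) with y :: real and x :: nat => real,
   where only the coordinates x 1, ..., x d are meaningful.
   The metric is g = dy^2 + sum_{i=1..d} exp(-2 lam_i y) dx_i^2. *)

(* A geodesic of (M,g), parametrised on [0,1]: a C^2-type curve t |-> (Y t, X . t)
   satisfying the geodesic equations of g (Christoffel symbols written out):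
     Y'' + sum_i lam_i exp(-2 lam_i Y) (X_i')^2 = 0,
     X_i'' - 2 lam_i Y' X_i' = 0. *)
definition geodesic ::
  "nat \<Rightarrow> (nat \<Rightarrow> real) \<Rightarrow> (real \<Rightarrow> real) \<Rightarrow> (nat \<Rightarrow> real \<Rightarrow> real) \<Rightarrow> bool" where
  "geodesic d lam Y X \<longleftrightarrow>
     (\<exists>Y' Y'' X' X''. \<forall>t\<in>{0..1::real}.
        (Y has_real_derivative Y' t) (at t within {0..1}) \<and>
        (Y' has_real_derivative Y'' t) (at t within {0..1}) \<and>
        (\<forall>i\<in>{1..d}. (X i has_real_derivative X' i t) (at t within {0..1}) \<and>
                     (X' i has_real_derivative X'' i t) (at t within {0..1})) \<and>
        Y'' t + (\<Sum>i=1..d. lam i * exp (-2 * lam i * Y t) * (X' i t)^2) = 0 \<and>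
        (\<forall>i\<in>{1..d}. X'' i t - 2 * lam i * Y' t * X' i t = 0))"

definition geodesically_convex ::
  "nat \<Rightarrow> (nat \<Rightarrow> real) \<Rightarrow> (real \<times> (nat \<Rightarrow> real)) set \<Rightarrow> bool" where
  "geodesically_convex d lam S \<longleftrightarrow>
     (\<forall>Y X. geodesic d lam Y X \<longrightarrow> (Y 0, (\<lambda>i. X i 0)) \<in> S \<longrightarrow> (Y 1, (\<lambda>i. X i 1)) \<in> S
        \<longrightarrow> (\<forall>t\<in>{0..1}. (Y t, (\<lambda>i. X i t)) \<in> S))"

definition Vset :: "nat \<Rightarrow> (nat \<Rightarrow> real) \<Rightarrow> (real \<times> (nat \<Rightarrow> real)) set" where
  "Vset d lam = {(y, x). Max ((\<lambda>i. exp (- lam i * y / 2) * \<bar>x i\<bar>) ` {1..d}) \<le> 1}"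

end

theory Submission
  imports Defs
begin

text \<open>
  Fix a coordinate \<open>i\<close> and put \<open>l = \<lambda>\<^sub>i\<close>. Along a geodesic, \<open>y\<close> is concave (its
  equation reads \<open>y'' = - \<Sum>\<^sub>j \<lambda>\<^sub>j exp (-2 \<lambda>\<^sub>j y) x\<^sub>j'\<^sup>2\<close>) and \<open>x\<^sub>i' exp (-2 l y)\<close> is
  conserved. It suffices that \<open>F = x\<^sub>i\<^sup>2 exp (-l y)\<close>, the square of the \<open>i\<close>-th term in the
  definition of \<open>V\<close>, has no interior maximum above its endpoint values. At such a maximum
  \<open>F' = 0\<close> and \<open>x\<^sub>i \<noteq> 0\<close>. If \<open>y' \<noteq> 0\<close> there, the geodesic equations turn this into
  \<open>F'' = (3/2) l\<^sup>2 y'\<^sup>2 F - l y'' F > 0\<close>, so \<open>F\<close> increases to the right. If \<open>y' = 0\<close>, then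
  \<open>x\<^sub>i' = 0\<close> as well, hence \<open>x\<^sub>i' = 0\<close> everywhere by conservation; so \<open>x\<^sub>i\<close> is constant
  while \<open>y\<close> is nonincreasing afterwards, and \<open>F\<close> can only grow up to the endpoint.
\<close>

lemma pos_second_deriv_imp_increase_right:
  fixes f f' :: "real \<Rightarrow> real"
  assumes "t < b" and cont: "continuous_on {t..b} f"
    and f_deriv: "\<And>x. t < x \<Longrightarrow> x < b \<Longrightarrow> (f has_real_derivative f' x) (at x)"
    and "f' t = 0" and "(f' has_real_derivative D) (at t)" and "0 < D"
  obtains s where "t < s" "s < b" "f t < f s"
proof -
  obtain \<delta> where "0 < \<delta>" and f'_pos: "\<And>h. 0 < h \<Longrightarrow> h < \<delta> \<Longrightarrow> 0 < f' (t + h)"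
    using DERIV_pos_inc_right[OF assms(5,6)] \<open>f' t = 0\<close> by auto
  define s where "s = min (t + \<delta> / 2) ((t + b) / 2)"
  have s: "t < s" "s < b" "s - t < \<delta>"
    using \<open>t < b\<close> \<open>0 < \<delta>\<close> by (auto simp: s_def min_def)
  have "f t < f s"
  proof (rule DERIV_pos_imp_increasing_open[OF \<open>t < s\<close>])
    fix x assume "t < x" "x < s"
    then show "\<exists>y. (f has_real_derivative y) (at x) \<and> 0 < y"
      using f_deriv f'_pos[of "x - t"] s by force
  qed (rule continuous_on_subset[OF cont], use s in auto)
  with s show thesis by (intro that)
qed

lemma exp_half_mult_abs_le_one_iff:
  fixes l y x :: real
  shows "exp (- l * y / 2) * \<bar>x\<bar> \<le> 1 \<longleftrightarrow> x\<^sup>2 * exp (- l * y) \<le> 1"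
proof -
  have "(exp (- l * y / 2) * \<bar>x\<bar>)\<^sup>2 = x\<^sup>2 * exp (- l * y)"
    by (simp add: power_mult_distrib flip: exp_of_nat_mult)
  then show ?thesis
    using power_le_one_iff[of "exp (- l * y / 2) * \<bar>x\<bar>" 2] by simp
qed

lemma mem_Vset_iff:
  assumes "d \<ge> 1"
  shows "(y, x) \<in> Vset d lam \<longleftrightarrow> (\<forall>i\<in>{1..d}. (x i)\<^sup>2 * exp (- lam i * y) \<le> 1)"
proof -
  have "(y, x) \<in> Vset d lam \<longleftrightarrow> (\<forall>i\<in>{1..d}. exp (- lam i * y / 2) * \<bar>x i\<bar> \<le> 1)"
    using assms by (simp add: Vset_def Max_le_iff)
  then show ?thesis
    by (simp only: exp_half_mult_abs_le_one_iff)
qed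

locale warped_geodesic_coordinate =
  fixes a b l :: real and Y Y' Y'' X X' X'' :: "real \<Rightarrow> real"
  assumes l_pos: "0 < l"
    and Y_deriv: "\<And>t. t \<in> {a..b} \<Longrightarrow> (Y has_real_derivative Y' t) (at t within {a..b})"
    and Y'_deriv: "\<And>t. t \<in> {a..b} \<Longrightarrow> (Y' has_real_derivative Y'' t) (at t within {a..b})"
    and X_deriv: "\<And>t. t \<in> {a..b} \<Longrightarrow> (X has_real_derivative X' t) (at t within {a..b})"
    and X'_deriv: "\<And>t. t \<in> {a..b} \<Longrightarrow> (X' has_real_derivative X'' t) (at t within {a..b})"
    and Y''_nonpos: "\<And>t. t \<in> {a..b} \<Longrightarrow> Y'' t \<le> 0"
    and X''_eq: "\<And>t. t \<in> {a..b} \<Longrightarrow> X'' t = 2 * l * Y' t * X' t"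
begin

lemma continuous_on_Y: "continuous_on {a..b} Y"
  using Y_deriv by (rule DERIV_continuous_on)

lemma continuous_on_Y': "continuous_on {a..b} Y'"
  using Y'_deriv by (rule DERIV_continuous_on)

lemma continuous_on_X: "continuous_on {a..b} X"
  using X_deriv by (rule DERIV_continuous_on)

lemma interior_derivs:
  assumes "a < t" "t < b"
  shows "(Y has_real_derivative Y' t) (at t)" "(Y' has_real_derivative Y'' t) (at t)"
    "(X has_real_derivative X' t) (at t)" "(X' has_real_derivative X'' t) (at t)"
  using Y_deriv[of t] Y'_deriv[of t] X_deriv[of t] X'_deriv[of t] assms
  by (simp_all add: at_within_Icc_at)

definition F :: "real \<Rightarrow> real" where
  "F t = (X t)\<^sup>2 * exp (- l * Y t)"

definition F' :: "real \<Rightarrow> real" where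
  "F' t = exp (- l * Y t) * (2 * X t * X' t - l * Y' t * (X t)\<^sup>2)"

definition F'' :: "real \<Rightarrow> real" where
  "F'' t = exp (- l * Y t) *
     (2 * (X' t)\<^sup>2 + 2 * X t * X'' t - 4 * l * Y' t * X t * X' t
      - l * Y'' t * (X t)\<^sup>2 + l\<^sup>2 * (Y' t)\<^sup>2 * (X t)\<^sup>2)"

lemma continuous_on_F: "continuous_on {a..b} F"
  unfolding F_def by (intro continuous_intros continuous_on_X continuous_on_Y)

lemma F_deriv: "a < t \<Longrightarrow> t < b \<Longrightarrow> (F has_real_derivative F' t) (at t)"
  unfolding F_def[abs_def] F'_def
  by (auto intro!: derivative_eq_intros interior_derivs simp: algebra_simps power2_eq_square)

lemma F'_deriv: "a < t \<Longrightarrow> t < b \<Longrightarrow> (F' has_real_derivative F'' t) (at t)"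
  unfolding F'_def[abs_def] F''_def
  by (auto intro!: derivative_eq_intros interior_derivs simp: algebra_simps power2_eq_square)

lemma F''_pos_at_critical_point:
  assumes "t \<in> {a..b}" "F' t = 0" "X t \<noteq> 0" "Y' t \<noteq> 0"
  shows "0 < F'' t"
proof -
  have X': "X' t = l * Y' t * X t / 2"
    using assms(2,3) by (simp add: F'_def power2_eq_square field_simps)
  have F'': "F'' t = exp (- l * Y t) * (3/2 * l\<^sup>2 * (Y' t)\<^sup>2 * (X t)\<^sup>2 - l * Y'' t * (X t)\<^sup>2)"
    by (simp add: F''_def X''_eq[OF assms(1)] X' power2_eq_square algebra_simps)
  have "0 < 3/2 * l\<^sup>2 * (Y' t)\<^sup>2 * (X t)\<^sup>2"
    using l_pos assms(3,4) by simp
  moreover have "l * Y'' t * (X t)\<^sup>2 \<le> 0"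
    using l_pos Y''_nonpos[OF assms(1)] by (intro mult_nonpos_nonneg mult_nonneg_nonpos) auto
  ultimately show ?thesis
    unfolding F'' by (intro mult_pos_pos exp_gt_zero) linarith
qed

lemma momentum_deriv:
  "a < t \<Longrightarrow> t < b \<Longrightarrow> ((\<lambda>s. X' s * exp (- 2 * l * Y s)) has_real_derivative 0) (at t)"
  by (auto intro!: derivative_eq_intros interior_derivs simp: X''_eq algebra_simps)

lemma momentum_conserved:
  assumes "s \<in> {a..b}" "t \<in> {a..b}"
  shows "X' s * exp (- 2 * l * Y s) = X' t * exp (- 2 * l * Y t)"
proof (cases "a < b")
  case True
  have "continuous_on {a..b} (\<lambda>s. X' s * exp (- 2 * l * Y s))"
    using X'_deriv by (intro continuous_intros continuous_on_Y DERIV_continuous_on)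
  from DERIV_isconst2[OF True this momentum_deriv] assms show ?thesis
    by (metis atLeastAtMost_iff)
next
  case False
  with assms have "s = t" by auto
  then show ?thesis by simp
qed

lemma X_constant_if_X'_vanishes:
  assumes "t \<in> {a..b}" "X' t = 0" "s \<in> {a..b}"
  shows "X s = X t"
proof (cases "a < b")
  case True
  have X'_zero: "X' r = 0" if "r \<in> {a..b}" for r
    using momentum_conserved[OF that assms(1)] assms(2) by simp
  have "X r = X a" if "r \<in> {a..b}" for r
  proof (rule DERIV_isconst2[OF True continuous_on_X])
    fix x assume "a < x" "x < b"
    then show "(X has_real_derivative 0) (at x)"
      using interior_derivs(3)[of x] X'_zero[of x] by simp
  qed (use that in auto)
  with assms show ?thesis by metis
next
  case False
  with assms have "s = t" by auto
  then show ?thesis by simp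
qed

lemma Y'_antimono:
  assumes "s \<in> {a..b}" "t \<in> {a..b}" "s \<le> t"
  shows "Y' t \<le> Y' s"
proof (rule DERIV_nonpos_imp_decreasing_open[of s t Y'])
  fix x assume "s < x" "x < t"
  with assms show "\<exists>y. (Y' has_real_derivative y) (at x) \<and> y \<le> 0"
    using interior_derivs(2)[of x] Y''_nonpos[of x] by auto
next
  show "continuous_on {s..t} Y'"
    using assms by (intro continuous_on_subset[OF continuous_on_Y']) auto
qed (rule \<open>s \<le> t\<close>)

lemma F_le_F_end_if_stationary:
  assumes "t \<in> {a..b}" "Y' t = 0" "X' t = 0"
  shows "F t \<le> F b"
proof -
  have "Y b \<le> Y t"
  proof (rule DERIV_nonpos_imp_decreasing_open[of t b Y])
    fix x assume x: "t < x" "x < b"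
    with assms(1) have "a < x" "x \<in> {a..b}" by auto
    with x assms have "Y' x \<le> 0"
      using Y'_antimono[of t x] by simp
    then show "\<exists>y. (Y has_real_derivative y) (at x) \<and> y \<le> 0"
      using interior_derivs(1)[OF \<open>a < x\<close> \<open>x < b\<close>] by blast
  next
    show "continuous_on {t..b} Y"
      using assms by (intro continuous_on_subset[OF continuous_on_Y]) auto
  qed (use assms in auto)
  moreover have "X b = X t"
    using assms(1) by (intro X_constant_if_X'_vanishes[OF assms(1,3)]) auto
  ultimately show ?thesis
    using l_pos by (simp add: F_def mult_left_mono)
qed

lemma F_le_max_endpoints:
  assumes "t \<in> {a..b}"
  shows "F t \<le> max (F a) (F b)"
proof (rule ccontr)
  assume "\<not> ?thesis"
  then have Ft: "max (F a) (F b) < F t" by (simp only: not_le)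
  obtain t\<^sub>0 where t\<^sub>0: "t\<^sub>0 \<in> {a..b}" and F_max: "\<And>s. s \<in> {a..b} \<Longrightarrow> F s \<le> F t\<^sub>0"
    using continuous_attains_sup[OF compact_Icc _ continuous_on_F] assms by blast
  have above: "max (F a) (F b) < F t\<^sub>0"
    using Ft F_max[OF assms] by simp
  then have interior: "a < t\<^sub>0" "t\<^sub>0 < b"
    using t\<^sub>0 by (auto simp: less_le)
  have "F' t\<^sub>0 = 0"
  proof (rule DERIV_local_max[OF F_deriv[OF interior]])
    show "0 < min (t\<^sub>0 - a) (b - t\<^sub>0)"
      using interior by simp
  qed (auto intro!: F_max)
  have "0 \<le> F a"
    by (simp add: F_def)
  with above have "0 < F t\<^sub>0"
    by linarith
  then have "X t\<^sub>0 \<noteq> 0"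
    by (auto simp: F_def)
  show False
  proof (cases "Y' t\<^sub>0 = 0")
    case True
    with \<open>F' t\<^sub>0 = 0\<close> \<open>X t\<^sub>0 \<noteq> 0\<close> have "X' t\<^sub>0 = 0"
      by (simp add: F'_def)
    then show False
      using F_le_F_end_if_stationary[OF t\<^sub>0 True] above by simp
  next
    case False
    have "continuous_on {t\<^sub>0..b} F"
      using t\<^sub>0 by (intro continuous_on_subset[OF continuous_on_F]) auto
    moreover have "(F has_real_derivative F' x) (at x)" if "t\<^sub>0 < x" "x < b" for x
      using F_deriv interior that by simp
    moreover have "0 < F'' t\<^sub>0"
      using F''_pos_at_critical_point[OF t\<^sub>0 \<open>F' t\<^sub>0 = 0\<close> \<open>X t\<^sub>0 \<noteq> 0\<close> False] .
    ultimately obtain s where "t\<^sub>0 < s" "s < b" "F t\<^sub>0 < F s"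
      using pos_second_deriv_imp_increase_right[OF \<open>t\<^sub>0 < b\<close> _ _ \<open>F' t\<^sub>0 = 0\<close> F'_deriv[OF interior]]
      by blast
    then show False
      using F_max[of s] interior by simp
  qed
qed

end

lemma geodesic_imp_warped_geodesic_coordinate:
  assumes "geodesic d lam Y X" and lam_pos: "\<And>j. j \<in> {1..d} \<Longrightarrow> 0 < lam j" and "i \<in> {1..d}"
  shows "\<exists>Y' Y'' X' X''. warped_geodesic_coordinate 0 1 (lam i) Y Y' Y'' (X i) X' X''"
proof -
  obtain Y' Y'' X' X'' where geo: "\<forall>t\<in>{0..1::real}.
        (Y has_real_derivative Y' t) (at t within {0..1}) \<and>
        (Y' has_real_derivative Y'' t) (at t within {0..1}) \<and>
        (\<forall>i\<in>{1..d}. (X i has_real_derivative X' i t) (at t within {0..1}) \<and>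
                     (X' i has_real_derivative X'' i t) (at t within {0..1})) \<and>
        Y'' t + (\<Sum>i=1..d. lam i * exp (-2 * lam i * Y t) * (X' i t)\<^sup>2) = 0 \<and>
        (\<forall>i\<in>{1..d}. X'' i t - 2 * lam i * Y' t * X' i t = 0)"
    using assms(1) unfolding geodesic_def by blast
  have Y''_nonpos: "Y'' t \<le> 0" if "t \<in> {0..1}" for t
  proof -
    have "0 \<le> (\<Sum>j=1..d. lam j * exp (-2 * lam j * Y t) * (X' j t)\<^sup>2)"
      using lam_pos by (intro sum_nonneg) (simp add: less_imp_le)
    with geo that show ?thesis by fastforce
  qed
  have X''_eq: "X'' i t = 2 * lam i * Y' t * X' i t" if "t \<in> {0..1}" for t
    using geo that \<open>i \<in> {1..d}\<close> by fastforce
  have "warped_geodesic_coordinate 0 1 (lam i) Y Y' Y'' (X i) (X' i) (X'' i)"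
    using geo \<open>i \<in> {1..d}\<close> lam_pos Y''_nonpos X''_eq by unfold_locales blast+
  then show ?thesis by blast
qed

theorem mainTheorem10:
  fixes d :: nat and lam :: "nat \<Rightarrow> real"
  assumes "d \<ge> 1"
    and "0 < lam 1"
    and "\<And>i j. 1 \<le> i \<Longrightarrow> i \<le> j \<Longrightarrow> j \<le> d \<Longrightarrow> lam i \<le> lam j"
  shows "geodesically_convex d lam (Vset d lam)"
  unfolding geodesically_convex_def
proof (intro allI impI ballI)
  fix Y X and t :: real
  assume geo: "geodesic d lam Y X" and t: "t \<in> {0..1}"
    and ends: "(Y 0, \<lambda>i. X i 0) \<in> Vset d lam" "(Y 1, \<lambda>i. X i 1) \<in> Vset d lam"
  have lam_pos: "0 < lam j" if "j \<in> {1..d}" for j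
    using assms(2) assms(3)[of 1 j] that by force
  show "(Y t, \<lambda>i. X i t) \<in> Vset d lam"
    unfolding mem_Vset_iff[OF assms(1)]
  proof
    fix i assume i: "i \<in> {1..d}"
    then obtain Y' Y'' X' X'' where "warped_geodesic_coordinate 0 1 (lam i) Y Y' Y'' (X i) X' X''"
      using geodesic_imp_warped_geodesic_coordinate[OF geo lam_pos] by blast
    then interpret warped_geodesic_coordinate 0 1 "lam i" Y Y' Y'' "X i" X' X'' .
    have "F 0 \<le> 1" "F 1 \<le> 1"
      using ends i unfolding F_def mem_Vset_iff[OF assms(1)] by auto
    with F_le_max_endpoints[OF t] have "F t \<le> 1"
      by linarith
    then show "(X i t)\<^sup>2 * exp (- lam i * Y t) \<le> 1"
      by (simp only: F_def)
  qed
qed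

end
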